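(* Let $(D,\Gamma)$ be a consistent action theory, $n\ge0$, and let $X$ be an answer set of the program $\pi$. Then: (i) $s_t(X)$ is a state of $D$ for every $t\in\{0,\dots,n\}$; (ii) for every $t\in\{0,\dots,n-1\}$ and action $a$, if $occ(a,t)\in X$ then $a$ is executable in $s_t(X)$ and $s_{t+1}(X)\in\Phi(a,s_t(X))$; (iii) for every $t\in\{0,\dots,n-1\}$, if $occ(a,t)\notin X$ for every action $a$, then $s_{t+1}(X)=s_t(X)$.
   Context: Action language $\mathcal{B}$: fix finite sets $\mathbf{F}$ of fluents and $\mathbf{A}$ of actions. A fluent literal is $f$ or $\neg f$ ($f\in\mathbf{F}$); the complement $\bar l$ of $f$ is $\neg f$ and of $\neg f$ is $f$. A set of fluent literals is consistent if it contains no pair $f,\neg f$; an interpretation is a maximal consistent set. For a set $u$ of literals, $u\models p_1\wedge\dots\wedge p_k$ means $\{p_1,\dots,p_k\}\subseteq u$. A domain description $D$ is a finite set of static causal laws $\mathbf{caused}(\{p_1,\dots,p_k\},f)$ (their set is $D_C$), dynamic causal laws $\mathbf{causes}(a,f,\{p_1,\dots,p_k\})$ and executability conditions $\mathbf{executable}(a,\{p_1,\dots,p_k\})$, with $a\in\mathbf{A}$ and $f,p_i$ fluent literals; $\Gamma$ is a set of propositions $\mathbf{initially}(f)$. A consistent set $u$ is closed under $D_C$ if for every $\mathbf{caused}(P,f)\in D_C$ with $P\subseteq u$, $f\in u$; $Cl_{D_C}(u)$ is the least consistent superset of $u$ closed under $D_C$ (undefined if none). A state is an interpretation closed under $D_C$.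 Action $a$ is executable in state $s$ if some $\mathbf{executable}(a,P)\in D$ has $P\subseteq s$. $E(a,s)=\{f\mid \mathbf{causes}(a,f,P)\in D,\ P\subseteq s\}$. $\Phi(a,s)=\{s'\mid s'\text{ a state},\ s'=Cl_{D_C}(E(a,s)\cup(s\cap s'))\}$ if $a$ is executable in $s$, and $\Phi(a,s)=\emptyset$ otherwise. A trajectory is a sequence $s_0a_0s_1\dots a_{m-1}s_m$ of states $s_i$ and actions $a_i$ with $s_{i+1}\in\Phi(a_i,s_i)$. $D$ is consistent if $\Phi(a,s)\ne\emptyset$ whenever $a$ is executable in state $s$; $(D,\Gamma)$ is consistent if $D$ is consistent and $s_0^\Gamma:=\{f\mid\mathbf{initially}(f)\in\Gamma\}$ is a state of $D$. Answer sets: a ground normal program consists of rules $h\leftarrow b_1,\dots,b_m,\mathit{not}\,c_1,\dots,\mathit{not}\,c_r$ and constraints $\bot\leftarrow b_1,\dots,b_m,\mathit{not}\,c_1,\dots,\mathit{not}\,c_r$. For a set $S$ of atoms, the reduct $\Pi^S$ deletes every rule/constraint containing $\mathit{not}\,c$ with $c\in S$ and deletes all $\mathit{not}$-literals from the rest; $S$ is an answer set of $\Pi$ if $S$ is the least set of atoms closed under the non-constraint rules of $\Pi^S$ and no constraint of $\Pi^S$ has its whole body contained in $S$. The program $\pi$ (ground; $t$ ranges over $\{0,\dots,n\}$ unless stated): (1) $holds(l,0)\leftarrow$ for each $\mathbf{initially}(l)\in\Gamma$; (2) $possible(a,t)\leftarrow holds(p_1,t),\dots,holds(p_k,t)$ for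 each $\mathbf{executable}(a,\{p_1,\dots,p_k\})\in D$; (3) for $t\in\{0,\dots,n-1\}$, $holds(f,t+1)\leftarrow occ(a,t),possible(a,t),holds(p_1,t),\dots,holds(p_k,t)$ for each $\mathbf{causes}(a,f,\{p_1,\dots,p_k\})\in D$; (4) $holds(f,t)\leftarrow holds(p_1,t),\dots,holds(p_k,t)$ for each $\mathbf{caused}(\{p_1,\dots,p_k\},f)\in D$; (5) $occ(a,t)\leftarrow possible(a,t),\mathit{not}\,nocc(a,t)$ for each action $a$; (6) $nocc(a,t)\leftarrow occ(b,t)$ for each pair of distinct actions $a\ne b$; (7) for $t\in\{0,\dots,n-1\}$, $holds(l,t+1)\leftarrow holds(l,t),\mathit{not}\,holds(\bar l,t+1)$ for each fluent literal $l$; (8) $\bot\leftarrow holds(f,t),holds(\neg f,t)$ for each fluent $f$. For a set $M$ of atoms, $s_i(M)=\{l\mid l\text{ a fluent literal},\ holds(l,i)\in M\}$. *)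

theory Defs
  imports Main
begin

datatype 'f lit = Pos 'f | Neg 'f

fun compl :: "'f lit \<Rightarrow> 'f lit" where
  "compl (Pos f) = Neg f"
| "compl (Neg f) = Pos f"

datatype ('f, 'a) law =
    Caused "'f lit set" "'f lit"
  | Causes 'a "'f lit" "'f lit set"
  | Executable 'a "'f lit set"

definition consistent :: "'f lit set \<Rightarrow> bool" where
  "consistent u \<longleftrightarrow> (\<forall>f. \<not> (Pos f \<in> u \<and> Neg f \<in> u))"

definition is_interpretation :: "'f lit set \<Rightarrow> bool" where
  "is_interpretation u \<longleftrightarrow> consistent u \<and> (\<forall>v. consistent v \<and> u \<subseteq> v \<longrightarrow> v = u)"

definition static_laws :: "('f, 'a) law set \<Rightarrow> ('f lit set \<times> 'f lit) set" where
  "static_laws D = {(P, l). Caused P l \<in> D}"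

definition closed_under :: "('f lit set \<times> 'f lit) set \<Rightarrow> 'f lit set \<Rightarrow> bool" where
  "closed_under DC u \<longleftrightarrow> (\<forall>(P, l) \<in> DC. P \<subseteq> u \<longrightarrow> l \<in> u)"

definition is_Cl :: "('f lit set \<times> 'f lit) set \<Rightarrow> 'f lit set \<Rightarrow> 'f lit set \<Rightarrow> bool" where
  "is_Cl DC u v \<longleftrightarrow> consistent v \<and> u \<subseteq> v \<and> closed_under DC v \<and>
     (\<forall>w. consistent w \<and> u \<subseteq> w \<and> closed_under DC w \<longrightarrow> v \<subseteq> w)"

definition state :: "('f, 'a) law set \<Rightarrow> 'f lit set \<Rightarrow> bool" where
  "state D s \<longleftrightarrow> is_interpretation s \<and> closed_under (static_laws D) s"

definition executable :: "('f, 'a) law set \<Rightarrow> 'a \<Rightarrow> 'f lit set \<Rightarrow> bool" where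
  "executable D a s \<longleftrightarrow> (\<exists>P. Executable a P \<in> D \<and> P \<subseteq> s)"

definition effects :: "('f, 'a) law set \<Rightarrow> 'a \<Rightarrow> 'f lit set \<Rightarrow> 'f lit set" where
  "effects D a s = {f. \<exists>P. Causes a f P \<in> D \<and> P \<subseteq> s}"

definition Phi :: "('f, 'a) law set \<Rightarrow> 'a \<Rightarrow> 'f lit set \<Rightarrow> 'f lit set set" where
  "Phi D a s = (if executable D a s then
      {s'. state D s' \<and> is_Cl (static_laws D) (effects D a s \<union> (s \<inter> s')) s'} else {})"

definition consistent_domain :: "('f, 'a) law set \<Rightarrow> bool" where
  "consistent_domain D \<longleftrightarrow> (\<forall>a s. state D s \<and> executable D a s \<longrightarrow> Phi D a s \<noteq> {})"

text \<open>Gamma is represented by the set of literals l with initially(l) in Gamma.\<close>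
definition consistent_theory :: "('f, 'a) law set \<Rightarrow> 'f lit set \<Rightarrow> bool" where
  "consistent_theory D Gamma \<longleftrightarrow> consistent_domain D \<and> state D Gamma"

text \<open>A rule is (head, positive body, negative body); head None means a constraint (bottom).\<close>
type_synonym 'x rule = "'x option \<times> 'x set \<times> 'x set"

definition reduct :: "'x rule set \<Rightarrow> 'x set \<Rightarrow> ('x option \<times> 'x set) set" where
  "reduct Pi S = {(h, B). \<exists>N. (h, B, N) \<in> Pi \<and> N \<inter> S = {}}"

definition closed_prog :: "('x option \<times> 'x set) set \<Rightarrow> 'x set \<Rightarrow> bool" where
  "closed_prog R M \<longleftrightarrow> (\<forall>h B. (Some h, B) \<in> R \<and> B \<subseteq> M \<longrightarrow> h \<in> M)"

definition answer_set :: "'x rule set \<Rightarrow> 'x set \<Rightarrow> bool" where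
  "answer_set Pi S \<longleftrightarrow>
     closed_prog (reduct Pi S) S \<and>
     (\<forall>M. closed_prog (reduct Pi S) M \<longrightarrow> S \<subseteq> M) \<and>
     (\<forall>B. (None, B) \<in> reduct Pi S \<longrightarrow> \<not> B \<subseteq> S)"

datatype ('f, 'a) atom =
    Holds "'f lit" nat | Possible 'a nat | Occ 'a nat | Nocc 'a nat

definition prog :: "('f, 'a) law set \<Rightarrow> 'f lit set \<Rightarrow> nat \<Rightarrow> ('f, 'a) atom rule set" where
  "prog D Gamma n =
     {(Some (Holds l 0), {}, {}) | l. l \<in> Gamma}
   \<union> {(Some (Possible a t), (\<lambda>p. Holds p t) ` P, {}) | a P t. Executable a P \<in> D \<and> t \<le> n}
   \<union> {(Some (Holds f (Suc t)), {Occ a t, Possible a t} \<union> (\<lambda>p. Holds p t) ` P, {}) | a f P t.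
        Causes a f P \<in> D \<and> t < n}
   \<union> {(Some (Holds f t), (\<lambda>p. Holds p t) ` P, {}) | f P t. Caused P f \<in> D \<and> t \<le> n}
   \<union> {(Some (Occ a t), {Possible a t}, {Nocc a t}) | a t. t \<le> n}
   \<union> {(Some (Nocc a t), {Occ b t}, {}) | a b t. a \<noteq> b \<and> t \<le> n}
   \<union> {(Some (Holds l (Suc t)), {Holds l t}, {Holds (compl l) (Suc t)}) | l t. t < n}
   \<union> {(None, {Holds (Pos f) t, Holds (Neg f) t}, {}) | f t. t \<le> n}"

definition st :: "('f, 'a) atom set \<Rightarrow> nat \<Rightarrow> 'f lit set" where
  "st M i = {l. Holds l i \<in> M}"

end

theory Submission
  imports Defs
begin

text \<open>
  The constraints (8)
  make every s_t(X) consistent, rules (4) make it closed under the static laws, and the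
  inertia rules (7) propagate completeness of s_0(X) = Gamma from t to t + 1. Rules (6)
  allow at most one occurrence per time step. For the transition, remove from X the atoms
  holds(l, t+1) with l outside a candidate set w: if w is closed under D_C and contains the
  effects of the occurring action and the inertial part s_t(X) \<inter> s_{t+1}(X), the
  remaining set is still closed under the reduct, so minimality of X gives
  s_{t+1}(X) \<subseteq> w. Hence s_{t+1}(X) is the closure in the definition of \<Phi>, and
  without an occurrence it is contained in, hence equal to, the interpretation s_t(X).
\<close>

lemma answer_set_closed:
  assumes "answer_set Pi X" "(Some h, B, N) \<in> Pi" "B \<subseteq> X" "N \<inter> X = {}"
  shows "h \<in> X"
  using assms unfolding answer_set_def closed_prog_def reduct_def by blast

lemma answer_set_minimal:
  assumes "answer_set Pi X"
    and "\<And>h B N. (Some h, B, N) \<in> Pi \<Longrightarrow> B \<subseteq> M \<Longrightarrow> N \<inter> X = {} \<Longrightarrow> h \<in> M"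
  shows "X \<subseteq> M"
proof -
  have "closed_prog (reduct Pi X) M"
    unfolding closed_prog_def reduct_def using assms(2) by blast
  then show ?thesis using assms(1) unfolding answer_set_def by blast
qed

lemma answer_set_constraint:
  assumes "answer_set Pi X" "(None, B, N) \<in> Pi" "N \<inter> X = {}"
  shows "\<not> B \<subseteq> X"
  using assms unfolding answer_set_def reduct_def by blast

lemma answer_set_supported:
  assumes "answer_set Pi X" "x \<in> X"
  obtains B N where "(Some x, B, N) \<in> Pi" "B \<subseteq> X" "N \<inter> X = {}"
proof -
  have "\<exists>B N. (Some x, B, N) \<in> Pi \<and> B \<subseteq> X \<and> N \<inter> X = {}"
  proof (rule ccontr)
    assume unsupported: "\<not> ?thesis"
    have "X \<subseteq> X - {x}"
      using assms(1) by (rule answer_set_minimal)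
        (use answer_set_closed[OF assms(1)] unsupported in blast)
    then show False using assms(2) by blast
  qed
  then show ?thesis using that by blast
qed

lemma is_interpretation_iff:
  "is_interpretation u \<longleftrightarrow> consistent u \<and> (\<forall>f. Pos f \<in> u \<or> Neg f \<in> u)"
proof
  assume u: "is_interpretation u"
  have "Pos f \<in> u \<or> Neg f \<in> u" for f
  proof (rule ccontr)
    assume "\<not> (Pos f \<in> u \<or> Neg f \<in> u)"
    moreover from this u have "consistent (insert (Pos f) u)"
      unfolding is_interpretation_def consistent_def by auto
    ultimately show False using u unfolding is_interpretation_def by blast
  qed
  then show "consistent u \<and> (\<forall>f. Pos f \<in> u \<or> Neg f \<in> u)"
    using u unfolding is_interpretation_def by blast
next
  assume u: "consistent u \<and> (\<forall>f. Pos f \<in> u \<or> Neg f \<in> u)"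
  have "v \<subseteq> u" if "consistent v" "u \<subseteq> v" for v
  proof
    fix l assume "l \<in> v"
    with u that show "l \<in> u" unfolding consistent_def by (cases l) blast+
  qed
  then show "is_interpretation u"
    using u unfolding is_interpretation_def by blast
qed

lemma prog_initially: "l \<in> Gamma \<Longrightarrow> (Some (Holds l 0), {}, {}) \<in> prog D Gamma n"
  unfolding prog_def by simp

lemma prog_causes: "Causes a f P \<in> D \<Longrightarrow> t < n \<Longrightarrow>
    (Some (Holds f (Suc t)), {Occ a t, Possible a t} \<union> (\<lambda>p. Holds p t) ` P, {}) \<in> prog D Gamma n"
  unfolding prog_def by simp blast

lemma prog_caused: "Caused P f \<in> D \<Longrightarrow> t \<le> n \<Longrightarrow>
    (Some (Holds f t), (\<lambda>p. Holds p t) ` P, {}) \<in> prog D Gamma n"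
  unfolding prog_def by simp blast

lemma prog_nocc: "a \<noteq> b \<Longrightarrow> t \<le> n \<Longrightarrow> (Some (Nocc a t), {Occ b t}, {}) \<in> prog D Gamma n"
  unfolding prog_def by simp

lemma prog_inertia: "t < n \<Longrightarrow>
    (Some (Holds l (Suc t)), {Holds l t}, {Holds (compl l) (Suc t)}) \<in> prog D Gamma n"
  unfolding prog_def by simp

lemma prog_constraint: "t \<le> n \<Longrightarrow> (None, {Holds (Pos f) t, Holds (Neg f) t}, {}) \<in> prog D Gamma n"
  unfolding prog_def by simp blast

lemma prog_Occ_rule:
  assumes "(Some (Occ a t), B, N) \<in> prog D Gamma n"
  shows "B = {Possible a t} \<and> N = {Nocc a t} \<and> t \<le> n"
  using assms unfolding prog_def by auto

lemma prog_Possible_rule: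
  assumes "(Some (Possible a t), B, N) \<in> prog D Gamma n"
  obtains P where "Executable a P \<in> D" "B = (\<lambda>p. Holds p t) ` P"
  using assms unfolding prog_def by auto

lemma prog_Holds_Suc_rule:
  assumes "(Some (Holds l (Suc t)), B, N) \<in> prog D Gamma n"
  obtains (causes) a P where "Causes a l P \<in> D" "B = {Occ a t, Possible a t} \<union> (\<lambda>p. Holds p t) ` P"
    | (caused) P where "Caused P l \<in> D" "B = (\<lambda>p. Holds p (Suc t)) ` P"
    | (inertia) "B = {Holds l t}" "N = {Holds (compl l) (Suc t)}"
  using assms unfolding prog_def by auto

context
  fixes D :: "('f, 'a) law set" and Gamma :: "'f lit set"
    and n :: nat and X :: "('f, 'a) atom set"
  assumes answer: "answer_set (prog D Gamma n) X"
begin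

lemma Occ_supported:
  assumes "Occ a t \<in> X"
  shows "Possible a t \<in> X \<and> Nocc a t \<notin> X \<and> t \<le> n"
proof -
  obtain B N where "(Some (Occ a t), B, N) \<in> prog D Gamma n" "B \<subseteq> X" "N \<inter> X = {}"
    using answer assms by (rule answer_set_supported)
  then show ?thesis by (auto dest: prog_Occ_rule)
qed

lemma executable_if_Occ:
  assumes "Occ a t \<in> X"
  shows "executable D a (st X t)"
proof -
  have "Possible a t \<in> X" using Occ_supported[OF assms] by blast
  then obtain B N where "(Some (Possible a t), B, N) \<in> prog D Gamma n" "B \<subseteq> X"
    by (rule answer_set_supported[OF answer])
  then obtain P where "Executable a P \<in> D" "(\<lambda>p. Holds p t) ` P \<subseteq> X"
    by (auto elim: prog_Possible_rule)
  then show ?thesis unfolding executable_def st_def by blast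
qed

lemma Occ_unique:
  assumes "Occ a t \<in> X" "Occ b t \<in> X"
  shows "a = b"
proof (rule ccontr)
  assume "a \<noteq> b"
  moreover have "t \<le> n" using Occ_supported[OF assms(1)] by blast
  ultimately have "Nocc a t \<in> X"
    using answer_set_closed[OF answer prog_nocc] assms(2) by blast
  then show False using Occ_supported[OF assms(1)] by blast
qed

lemma consistent_st:
  assumes "t \<le> n"
  shows "consistent (st X t)"
  using answer_set_constraint[OF answer prog_constraint[OF assms] Int_empty_left]
  unfolding consistent_def st_def by blast

lemma closed_under_st:
  assumes "t \<le> n"
  shows "closed_under (static_laws D) (st X t)"
  unfolding closed_under_def static_laws_def st_def
  using answer_set_closed[OF answer prog_caused[OF _ assms]] by blast

lemma initially_subset_st_0: "Gamma \<subseteq> st X 0"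
  unfolding st_def using answer_set_closed[OF answer prog_initially] by blast

lemma st_complete:
  assumes "state D Gamma" "t \<le> n"
  shows "Pos f \<in> st X t \<or> Neg f \<in> st X t"
  using assms(2)
proof (induction t arbitrary: f)
  case 0
  show ?case
    using assms(1) initially_subset_st_0 unfolding state_def is_interpretation_iff by blast
next
  case (Suc t)
  then obtain l where l: "l \<in> st X t" "l = Pos f \<or> l = Neg f" by fastforce
  have "Holds l (Suc t) \<in> X \<or> Holds (compl l) (Suc t) \<in> X"
  proof (rule disjCI)
    assume "Holds (compl l) (Suc t) \<notin> X"
    with Suc.prems l(1) show "Holds l (Suc t) \<in> X"
      using answer_set_closed[OF answer prog_inertia] unfolding st_def by simp
  qed
  then show ?case using l(2) unfolding st_def by auto
qed

lemma state_st:
  assumes "state D Gamma" "t \<le> n"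
  shows "state D (st X t)"
  unfolding state_def is_interpretation_iff
  using consistent_st closed_under_st st_complete assms by blast

lemma st_Suc_least:
  assumes w: "closed_under (static_laws D) w"
    and effects: "\<And>b f P. Causes b f P \<in> D \<Longrightarrow> Occ b t \<in> X \<Longrightarrow> P \<subseteq> st X t
      \<Longrightarrow> f \<in> w"
    and inertial: "st X t \<inter> st X (Suc t) \<subseteq> w"
  shows "st X (Suc t) \<subseteq> w"
proof -
  let ?M = "X - {Holds l (Suc t) | l. l \<notin> w}"
  have "X \<subseteq> ?M"
    using answer
  proof (rule answer_set_minimal)
    fix h B N assume rule: "(Some h, B, N) \<in> prog D Gamma n" "B \<subseteq> ?M" "N \<inter> X = {}"
    have B: "B \<subseteq> X" and kept: "\<And>l. Holds l (Suc t) \<in> B \<Longrightarrow> l \<in> w"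
      using rule(2) by blast+
    have "h \<in> X" using answer_set_closed[OF answer rule(1) B rule(3)] .
    moreover have "l \<in> w" if h: "h = Holds l (Suc t)" for l
      using rule(1)[unfolded h]
    proof (cases rule: prog_Holds_Suc_rule)
      case (causes b P)
      then have "Occ b t \<in> X" "P \<subseteq> st X t" using B unfolding st_def by auto
      then show ?thesis using effects causes(1) by blast
    next
      case (caused P)
      then have "P \<subseteq> w" using kept by blast
      then show ?thesis using w caused(1) unfolding closed_under_def static_laws_def by blast
    next
      case inertia
      then have "l \<in> st X t \<inter> st X (Suc t)" using B \<open>h \<in> X\<close> h unfolding st_def by simp
      then show ?thesis using inertial by blast
    qed
    ultimately show "h \<in> ?M" by blast
  qed
  then show ?thesis unfolding st_def by blast
qed

lemma effects_subset_st_Suc: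
  assumes "t < n" "Occ a t \<in> X"
  shows "effects D a (st X t) \<subseteq> st X (Suc t)"
proof
  fix f assume "f \<in> effects D a (st X t)"
  then obtain P where P: "Causes a f P \<in> D" "P \<subseteq> st X t"
    unfolding effects_def by blast
  have "{Occ a t, Possible a t} \<union> (\<lambda>p. Holds p t) ` P \<subseteq> X"
    using assms(2) Occ_supported[OF assms(2)] P(2) unfolding st_def by blast
  then have "Holds f (Suc t) \<in> X"
    using answer_set_closed[OF answer prog_causes[OF P(1) assms(1)]] by simp
  then show "f \<in> st X (Suc t)" unfolding st_def by simp
qed

lemma st_Suc_in_Phi:
  assumes "state D Gamma" "t < n" "Occ a t \<in> X"
  shows "st X (Suc t) \<in> Phi D a (st X t)"
proof -
  let ?u = "effects D a (st X t) \<union> (st X t \<inter> st X (Suc t))"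
  have "st X (Suc t) \<subseteq> w"
    if w: "consistent w \<and> ?u \<subseteq> w \<and> closed_under (static_laws D) w" for w
  proof (rule st_Suc_least)
    show "closed_under (static_laws D) w" "st X t \<inter> st X (Suc t) \<subseteq> w"
      using w by blast+
    fix b f P assume "Causes b f P \<in> D" "Occ b t \<in> X" "P \<subseteq> st X t"
    with Occ_unique[OF assms(3)] w show "f \<in> w" unfolding effects_def by blast
  qed
  moreover have "?u \<subseteq> st X (Suc t)"
    using effects_subset_st_Suc[OF assms(2,3)] by blast
  ultimately have "is_Cl (static_laws D) ?u (st X (Suc t))"
    unfolding is_Cl_def using consistent_st closed_under_st assms(2) by simp
  then show ?thesis
    unfolding Phi_def using executable_if_Occ[OF assms(3)] state_st[OF assms(1)] assms(2) by simp
qed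

lemma st_Suc_eq_if_no_Occ:
  assumes "state D Gamma" "t < n" "\<forall>a. Occ a t \<notin> X"
  shows "st X (Suc t) = st X t"
proof -
  have "st X (Suc t) \<subseteq> st X t"
    using assms(2) by (intro st_Suc_least closed_under_st) (use assms(3) in auto)
  moreover have "is_interpretation (st X (Suc t))"
    using state_st[OF assms(1)] assms(2) unfolding state_def by simp
  moreover have "consistent (st X t)"
    using consistent_st assms(2) by simp
  ultimately show ?thesis
    unfolding is_interpretation_def by blast
qed

end

theorem mainTheorem5:
  fixes D :: "('f::finite, 'a::finite) law set" and Gamma :: "'f lit set"
    and n :: nat and X :: "('f, 'a) atom set"
  assumes "finite D"
    and "consistent_theory D Gamma"
    and "answer_set (prog D Gamma n) X"
  shows "(\<forall>t\<le>n. state D (st X t))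
       \<and> (\<forall>t<n. \<forall>a. Occ a t \<in> X \<longrightarrow>
             executable D a (st X t) \<and> st X (Suc t) \<in> Phi D a (st X t))
       \<and> (\<forall>t<n. (\<forall>a. Occ a t \<notin> X) \<longrightarrow> st X (Suc t) = st X t)"
proof -
  note answer = assms(3)
  have initial_state: "state D Gamma"
    using assms(2) unfolding consistent_theory_def by blast
  show ?thesis
    using state_st[OF answer initial_state] executable_if_Occ[OF answer]
      st_Suc_in_Phi[OF answer initial_state] st_Suc_eq_if_no_Occ[OF answer initial_state]
    by blast
qed

end
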